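(* Let $\mu^*\approx 0.01191$ be the unique root in $(0,1)$ of $81\mu=(1-\mu)^3$. For the Best-Fit algorithm in the random-order model restricted to inputs in which every item has size in $(1/4,1/2]$, $$\limsup_{m\to\infty}\ \sup_{I:\ \mathrm{Opt}(I)=m,\ \text{all sizes in }(1/4,1/2]}\ \frac{\mathbb E_\sigma[\mathrm{BF}(I_\sigma)]}{\mathrm{Opt}(I)}\le \frac32-\frac{\mu^*}{2}\approx 1.4941.$$
   Context: Bin packing: items with sizes in $(0,1]$ are to be partitioned into the minimum number $\mathrm{Opt}(I)$ of bins of total size at most $1$. Best-Fit (BF) packs each arriving item into the fullest bin in which it fits, opening a new bin if necessary; $\mathrm{BF}(L)$ is the number of bins it uses on list $L$. In the random-order model, the list $I=(x_1,\dots,x_n)$ is fixed by an adversary, $\sigma$ is a uniformly random permutation of $[n]$, and items arrive in the order $I_\sigma=(x_{\sigma(1)},\dots,x_{\sigma(n)})$. *)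

theory Defs
  imports "HOL-Analysis.Analysis" "HOL-Combinatorics.Permutations"
begin

text \<open>A bin configuration is the list of loads of the currently open bins.
  Best-Fit puts item x into a fullest bin that can still accommodate it
  (ties broken by lowest index; the tie-breaking does not affect the number
  of bins), and opens a new bin if no bin fits.\<close>

definition bf_step :: "real list \<Rightarrow> real \<Rightarrow> real list" where
  "bf_step loads x =
     (let F = filter (\<lambda>j. loads ! j + x \<le> 1) [0..<length loads] in
      if F = [] then loads @ [x]
      else let m = Max ((\<lambda>j. loads ! j) ` set F);
               j = hd (filter (\<lambda>j. loads ! j = m) F)
           in loads[j := loads ! j + x])"

definition BF :: "real list \<Rightarrow> nat" where
  "BF L = length (foldl bf_step [] L)"

definition Opt :: "real list \<Rightarrow> nat" where
  "Opt I = (LEAST k. \<exists>f :: nat \<Rightarrow> nat.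
              (\<forall>i < length I. f i < k) \<and>
              (\<forall>j < k. (\<Sum>i \<in> {i. i < length I \<and> f i = j}. I ! i) \<le> 1))"

definition permute_list_by :: "(nat \<Rightarrow> nat) \<Rightarrow> real list \<Rightarrow> real list" where
  "permute_list_by \<sigma> I = map (\<lambda>i. I ! \<sigma> i) [0..<length I]"

definition E_BF_random :: "real list \<Rightarrow> real" where
  "E_BF_random I =
     (\<Sum>\<sigma> \<in> {\<sigma>. \<sigma> permutes {..<length I}}. real (BF (permute_list_by \<sigma> I)))
     / real (card {\<sigma>. \<sigma> permutes {..<length I}})"

end

theory Submission
  imports Defs "HOL-Combinatorics.Multiset_Permutations"
begin

text \<open>On items of size in \<open>(1/4, 1/2]\<close>, Best-Fit keeps at most one bin of load at most \<open>1/2\<close>.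
  Call an item a fit event if it fits into a bin that is already more than half full; the potential
  \<open>2 \<cdot> #bins + #fit events - #items - [some bin has load \<le> 1/2]\<close> never increases, so
  \<open>2 BF \<le> n + 1 - #fit events\<close>.
  Among four consecutive items of size at most \<open>1/3\<close> there is always a fit event, because a low
  bin receiving such an item ends up with load at most \<open>2/3\<close>. Counting fit events along maximal
  runs of small items gives \<open>#fit events \<ge> (5 W\<^sub>4 - 4 W\<^sub>5) / 8\<close>, where \<open>W\<^sub>k\<close> is the
  number of windows of \<open>k\<close> consecutive small items; in a uniformly random order
  \<open>E W\<^sub>k = (n + 1 - k) s\<^sup>k\<^sup>\<down> / n\<^sup>k\<^sup>\<down>\<close> with \<open>s\<close> the number of small items.
  An optimal bin holds at most three items, at most two of them large, so \<open>n \<le> 3 Opt\<close> and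
  \<open>n \<le> s + 2 Opt\<close>. An elementary estimate then gives \<open>E BF \<le> (3/2 - \<mu>/2) Opt + 2\<close> for
  every \<open>\<mu> < 1/81\<close>, and the root \<open>\<mu>\<^sup>* \<approx> 0.0119\<close> is such a \<open>\<mu>\<close>.\<close>

definition falling_factorial :: "nat \<Rightarrow> nat \<Rightarrow> real" where
  "falling_factorial k s = (\<Prod>j<k. real s - real j)"

lemma falling_factorial_0 [simp]: "falling_factorial 0 s = 1"
  by (simp add: falling_factorial_def)

lemma falling_factorial_Suc: "falling_factorial (Suc k) s = falling_factorial k s * (real s - real k)"
  by (simp add: falling_factorial_def)

lemma falling_factorial_Suc_left: "falling_factorial (Suc k) s = real s * falling_factorial k (s - 1)"
proof (cases s)
  case 0
  then show ?thesis by (auto simp: falling_factorial_def prod.lessThan_Suc_shift)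
next
  case (Suc s')
  then show ?thesis
    unfolding falling_factorial_def prod.lessThan_Suc_shift by (simp add: of_nat_diff)
qed

lemma falling_factorial_eq_0: "s < k \<Longrightarrow> falling_factorial k s = 0"
  unfolding falling_factorial_def by (intro prod_zero bexI[of _ s]) auto

lemma falling_factorial_nonneg: "0 \<le> falling_factorial k s"
proof (cases "s < k")
  case False
  then show ?thesis by (auto simp: falling_factorial_def intro!: prod_nonneg)
qed (simp add: falling_factorial_eq_0)

lemma falling_factorial_pos: "k \<le> n \<Longrightarrow> 0 < falling_factorial k n"
  unfolding falling_factorial_def by (intro prod_pos) auto

lemma falling_factorial_4: "falling_factorial 4 s = real s * (real s - 1) * (real s - 2) * (real s - 3)"
  by (simp add: falling_factorial_def numeral_eq_Suc lessThan_Suc algebra_simps)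

lemma fact_eq_falling_factorial: "k \<le> n \<Longrightarrow> fact n = falling_factorial k n * fact (n - k)"
proof (induction k)
  case (Suc k)
  have "n - k = Suc (n - Suc k)" using Suc.prems by simp
  then have "(fact (n - k) :: real) = (real n - real k) * fact (n - Suc k)"
    using Suc.prems by (simp add: of_nat_diff)
  then show ?case using Suc by (simp add: falling_factorial_Suc)
qed simp

definition windows :: "('a \<Rightarrow> bool) \<Rightarrow> nat \<Rightarrow> 'a list \<Rightarrow> nat set" where
  "windows P k xs = {i. i + k \<le> length xs \<and> (\<forall>t<k. P (xs ! (i + t)))}"

lemma finite_windows [simp]: "finite (windows P k xs)"
  by (rule finite_subset[of _ "{..length xs}"]) (auto simp: windows_def)

lemma windows_map: "windows P k (map f xs) = windows (P \<circ> f) k xs"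
  by (auto simp: windows_def)

lemma zero_in_windows_0 [simp]: "0 \<in> windows P 0 xs"
  by (simp add: windows_def)

lemma zero_in_windows_Suc_Nil [simp]: "0 \<notin> windows P (Suc k) []"
  by (simp add: windows_def)

lemma zero_in_windows_Suc_Cons [simp]:
  "0 \<in> windows P (Suc k) (x # xs) \<longleftrightarrow> P x \<and> 0 \<in> windows P k xs"
  by (auto simp: windows_def All_less_Suc2)

lemma windows_Cons:
  "windows P k (x # xs) = (if 0 \<in> windows P k (x # xs) then {0} else {}) \<union> Suc ` windows P k xs"
proof (intro set_eqI iffI)
  fix i assume "i \<in> windows P k (x # xs)"
  then show "i \<in> (if 0 \<in> windows P k (x # xs) then {0} else {}) \<union> Suc ` windows P k xs"
    by (cases i) (auto simp: windows_def)
qed (auto simp: windows_def split: if_splits)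

lemma card_windows_Cons:
  "card (windows P k (x # xs)) = card (windows P k xs) + of_bool (0 \<in> windows P k (x # xs))"
  by (subst windows_Cons) (auto simp: card_image)

lemma card_windows_Nil: "card (windows P k []) = of_bool (k = 0)"
  by (cases k) (auto simp: windows_def)

lemma sum_permutations_of_set_Cons:
  assumes "finite A" "A \<noteq> {}"
  shows "(\<Sum>xs\<in>permutations_of_set A. f xs) = (\<Sum>a\<in>A. \<Sum>ys\<in>permutations_of_set (A - {a}). f (a # ys))"
proof -
  have "(\<Sum>xs\<in>permutations_of_set A. f xs)
      = (\<Sum>a\<in>A. \<Sum>xs\<in>(#) a ` permutations_of_set (A - {a}). f xs)"
    unfolding permutations_of_set_nonempty[OF assms(2)]
    by (rule sum.UNION_disjoint) (auto simp: assms)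
  also have "\<dots> = (\<Sum>a\<in>A. \<Sum>ys\<in>permutations_of_set (A - {a}). f (a # ys))"
    by (rule sum.cong[OF refl]) (simp add: sum.reindex)
  finally show ?thesis .
qed

lemma card_filter_remove:
  assumes "finite X" "a \<in> X"
  shows "card {x\<in>X. x \<noteq> a \<and> P x} = card {x\<in>X. P x} - of_bool (P a)"
proof -
  have "{x\<in>X. x \<noteq> a \<and> P x} = {x\<in>X. P x} - {a}" by auto
  then show ?thesis using assms by (simp add: card_Diff_singleton_if)
qed

lemma sum_permutations_of_set_prefix_window:
  assumes "finite X"
  shows "(\<Sum>xs\<in>permutations_of_set X. of_bool (0 \<in> windows P k xs) :: real)
           = falling_factorial k (card {x\<in>X. P x}) * fact (card X - k)"
  using assms
proof (induction k arbitrary: X)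
  case (Suc k)
  show ?case
  proof (cases "X = {}")
    case False
    let ?s = "card {x\<in>X. P x}"
    have "(\<Sum>xs\<in>permutations_of_set X. of_bool (0 \<in> windows P (Suc k) xs) :: real)
        = (\<Sum>a\<in>X. if P a then falling_factorial k (card {x\<in>X - {a}. P x}) * fact (card (X - {a}) - k) else 0)"
      unfolding sum_permutations_of_set_Cons[OF Suc.prems False]
      by (rule sum.cong[OF refl]) (simp add: Suc.IH Suc.prems of_bool_conj del: sum_of_bool_eq)
    also have "\<dots> = (\<Sum>a\<in>X. if P a then falling_factorial k (?s - 1) * fact (card X - Suc k) else 0)"
      using Suc.prems by (intro sum.cong) (auto simp: card_filter_remove)
    also have "\<dots> = falling_factorial (Suc k) ?s * fact (card X - Suc k)"
      using Suc.prems by (simp add: sum.inter_filter[symmetric] falling_factorial_Suc_left)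
    finally show ?thesis .
  qed (auto simp: falling_factorial_def)
qed simp

lemma sum_falling_factorial_card_filter_remove:
  assumes "finite X"
  shows "(\<Sum>a\<in>X. falling_factorial k (card {x\<in>X. x \<noteq> a \<and> P x}))
           = falling_factorial k (card {x\<in>X. P x}) * (real (card X) - real k)"
proof -
  let ?s = "card {x\<in>X. P x}"
  have s_le: "?s \<le> card X" using assms by (intro card_mono) auto
  have P_part: "X \<inter> Collect P = {x\<in>X. P x}" and notP_part: "X \<inter> - Collect P = X - {x\<in>X. P x}"
    by auto
  have "(\<Sum>a\<in>X. falling_factorial k (card {x\<in>X. x \<noteq> a \<and> P x}))
      = (\<Sum>a\<in>X. if P a then falling_factorial k (?s - 1) else falling_factorial k ?s)"
    using assms by (intro sum.cong) (auto simp: card_filter_remove)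
  also have "\<dots> = real ?s * falling_factorial k (?s - 1) + real (card X - ?s) * falling_factorial k ?s"
    using assms by (simp add: sum.If_cases P_part notP_part card_Diff_subset)
  also have "real ?s * falling_factorial k (?s - 1) = falling_factorial k ?s * (real ?s - real k)"
    by (metis falling_factorial_Suc falling_factorial_Suc_left)
  finally show ?thesis using s_le by (simp add: of_nat_diff algebra_simps)
qed

lemma sum_card_windows_permutations_of_set:
  assumes "finite X" "card X = n"
  shows "(\<Sum>xs\<in>permutations_of_set X. real (card (windows P k xs)))
           = real (n + 1 - k) * falling_factorial k (card {x\<in>X. P x}) * fact (n - k)"
  using assms
proof (induction n arbitrary: X)
  case 0
  then show ?case by (simp add: card_windows_Nil)
next
  case (Suc n)
  let ?s = "card {x\<in>X. P x}"
  let ?F = "falling_factorial k ?s"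
  have "X \<noteq> {}" using Suc.prems by auto
  have "(\<Sum>xs\<in>permutations_of_set X. real (card (windows P k xs)))
      = (\<Sum>a\<in>X. \<Sum>ys\<in>permutations_of_set (X - {a}). real (card (windows P k ys)))
        + (\<Sum>xs\<in>permutations_of_set X. of_bool (0 \<in> windows P k xs))"
    unfolding sum_permutations_of_set_Cons[OF Suc.prems(1) \<open>X \<noteq> {}\<close>]
    by (simp add: card_windows_Cons sum.distrib del: sum_of_bool_eq)
  also have "\<dots> = real (n + 1 - k) * fact (n - k) * (\<Sum>a\<in>X. falling_factorial k (card {x\<in>X. x \<noteq> a \<and> P x}))
        + ?F * fact (Suc n - k)"
    using Suc by (simp add: sum_permutations_of_set_prefix_window sum_distrib_left algebra_simps
        del: sum_of_bool_eq)
  also have "\<dots> = real (Suc n + 1 - k) * ?F * fact (Suc n - k)"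
  proof (cases "k \<le> n")
    case True
    have diff_eqs: "(fact (Suc n - k) :: real) = (real n - real k + 1) * fact (n - k)"
      "real (n + 1 - k) = real n - real k + 1" "real (Suc n + 1 - k) = real n - real k + 2"
      using True by (simp_all add: Suc_diff_le of_nat_diff)
    have "real (n + 1 - k) * fact (n - k) * (F * (real (Suc n) - real k)) + F * fact (Suc n - k)
        = real (Suc n + 1 - k) * F * fact (Suc n - k)" for F :: real
      unfolding diff_eqs by (simp add: algebra_simps)
    then show ?thesis
      unfolding sum_falling_factorial_card_filter_remove[OF Suc.prems(1)] Suc.prems(2) .
  next
    case False
    moreover have "?s \<le> card X" using Suc.prems(1) by (intro card_mono) auto
    ultimately show ?thesis
      using Suc.prems(2) by (cases "k = Suc n") (simp_all add: falling_factorial_eq_0)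
  qed
  finally show ?case .
qed

lemma average_card_windows_permutations_of_set:
  assumes "finite X" "card X = n" "k \<le> n"
  shows "(\<Sum>xs\<in>permutations_of_set X. real (card (windows P k xs))) / fact n
           = real (n + 1 - k) * falling_factorial k (card {x\<in>X. P x}) / falling_factorial k n"
  using falling_factorial_pos[OF assms(3)]
  by (simp add: sum_card_windows_permutations_of_set[OF assms(1,2)] fact_eq_falling_factorial[OF assms(3)])

definition medium_item :: "real \<Rightarrow> bool" where
  "medium_item x \<longleftrightarrow> 1/4 < x \<and> x \<le> 1/2"

definition bf_invariant :: "real list \<Rightarrow> bool" where
  "bf_invariant loads \<longleftrightarrow> (\<forall>j<length loads. 1/4 < loads ! j \<and> loads ! j \<le> 1) \<and>
     (\<forall>i<length loads. \<forall>j<length loads. loads ! i \<le> 1/2 \<longrightarrow> loads ! j \<le> 1/2 \<longrightarrow> i = j)"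

definition has_low_bin :: "real list \<Rightarrow> bool" where
  "has_low_bin loads \<longleftrightarrow> (\<exists>j<length loads. loads ! j \<le> 1/2)"

definition fits_above_half :: "real list \<Rightarrow> real \<Rightarrow> bool" where
  "fits_above_half loads x \<longleftrightarrow> (\<exists>j<length loads. 1/2 < loads ! j \<and> loads ! j + x \<le> 1)"

definition has_high_bin_with_room :: "real list \<Rightarrow> bool" where
  "has_high_bin_with_room loads \<longleftrightarrow> (\<exists>j<length loads. 1/2 < loads ! j \<and> loads ! j \<le> 2/3)"

definition low_bins_below_third :: "real list \<Rightarrow> bool" where
  "low_bins_below_third loads \<longleftrightarrow> (\<forall>j<length loads. loads ! j \<le> 1/2 \<longrightarrow> loads ! j \<le> 1/3)"

lemma bf_step_no_fit:
  assumes "\<forall>j<length loads. 1 < loads ! j + x"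
  shows "bf_step loads x = loads @ [x]"
proof -
  have "filter (\<lambda>j. loads ! j + x \<le> 1) [0..<length loads] = []"
    using assms by (auto simp: filter_empty_conv)
  then show ?thesis by (simp add: bf_step_def)
qed

lemma bf_step_fit:
  assumes "\<exists>j<length loads. loads ! j + x \<le> 1"
  obtains j where "j < length loads" "bf_step loads x = loads[j := loads ! j + x]" "loads ! j + x \<le> 1"
    "\<And>i. i < length loads \<Longrightarrow> loads ! i + x \<le> 1 \<Longrightarrow> loads ! i \<le> loads ! j"
proof -
  define F where "F = filter (\<lambda>j. loads ! j + x \<le> 1) [0..<length loads]"
  define m where "m = Max ((!) loads ` set F)"
  define j where "j = hd (filter (\<lambda>j. loads ! j = m) F)"
  have set_F: "set F = {j. j < length loads \<and> loads ! j + x \<le> 1}" by (auto simp: F_def)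
  have "F \<noteq> []" using assms by (auto simp: F_def filter_empty_conv)
  then have "m \<in> (!) loads ` set F" unfolding m_def by (intro Max_in) auto
  then have "filter (\<lambda>j. loads ! j = m) F \<noteq> []" by (auto simp: filter_empty_conv)
  then have "j \<in> set (filter (\<lambda>j. loads ! j = m) F)" unfolding j_def by (rule hd_in_set)
  then have "j \<in> set F" "loads ! j = m" by auto
  moreover have "bf_step loads x = loads[j := loads ! j + x]"
    using \<open>F \<noteq> []\<close> by (simp add: bf_step_def Let_def flip: F_def m_def j_def)
  moreover have "loads ! i \<le> m" if "i \<in> set F" for i
    unfolding m_def using that by (intro Max_ge) auto
  ultimately show ?thesis using set_F by (intro that[of j]) auto
qed

text \<open>Under the invariant, Best-Fit either opens a new bin (only when no bin has load at most
  \<open>1/2\<close>) or raises a single bin above \<open>1/2\<close>; that bin was already above \<open>1/2\<close> exactly when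
  the item fits into a bin above \<open>1/2\<close>, since Best-Fit prefers fuller bins.\<close>

lemma bf_step_cases:
  assumes "bf_invariant loads" "medium_item x"
  obtains (new_bin) "\<not> has_low_bin loads" "\<not> fits_above_half loads x" "bf_step loads x = loads @ [x]"
  | (update) j where "j < length loads" "bf_step loads x = loads[j := loads ! j + x]"
      "1/2 < loads ! j + x" "loads ! j + x \<le> 1" "fits_above_half loads x \<longleftrightarrow> 1/2 < loads ! j"
proof (cases "\<exists>j<length loads. loads ! j + x \<le> 1")
  case False
  then have "\<not> has_low_bin loads" "\<not> fits_above_half loads x"
    using assms(2) by (auto simp: has_low_bin_def fits_above_half_def medium_item_def)
  with False show ?thesis by (intro new_bin bf_step_no_fit) auto
next
  case True
  then obtain j where j: "j < length loads" "bf_step loads x = loads[j := loads ! j + x]" "loads ! j + x \<le> 1"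
    "\<And>i. i < length loads \<Longrightarrow> loads ! i + x \<le> 1 \<Longrightarrow> loads ! i \<le> loads ! j"
    by (elim bf_step_fit) blast
  have "1/4 < loads ! j" using assms(1) j(1) by (auto simp: bf_invariant_def)
  moreover have "fits_above_half loads x \<longleftrightarrow> 1/2 < loads ! j"
    using j by (force simp: fits_above_half_def)
  ultimately show ?thesis using assms(2) j by (intro update) (auto simp: medium_item_def)
qed

lemma bf_invariant_bf_step:
  assumes "bf_invariant loads" "medium_item x"
  shows "bf_invariant (bf_step loads x)"
  using assms
proof (cases rule: bf_step_cases)
  case new_bin
  then show ?thesis using assms
    by (auto simp: bf_invariant_def has_low_bin_def medium_item_def nth_append not_le)
next
  case (update j)
  then show ?thesis using assms(1) by (auto simp: bf_invariant_def nth_list_update)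
qed

lemma bf_invariant_low_bin_unique:
  "bf_invariant loads \<Longrightarrow> i < length loads \<Longrightarrow> j < length loads \<Longrightarrow>
    loads ! i \<le> 1/2 \<Longrightarrow> loads ! j \<le> 1/2 \<Longrightarrow> i = j"
  unfolding bf_invariant_def by blast

lemma has_low_bin_update:
  assumes "bf_invariant loads" "j < length loads" "1/2 < y"
  shows "has_low_bin (loads[j := y]) \<longleftrightarrow> has_low_bin loads \<and> 1/2 < loads ! j"
proof
  assume "has_low_bin (loads[j := y])"
  then obtain i where i: "i < length loads" "loads[j := y] ! i \<le> 1/2" by (auto simp: has_low_bin_def)
  moreover have "i \<noteq> j" using i assms(2,3) by auto
  ultimately have "loads ! i \<le> 1/2" by simp
  moreover have "1/2 < loads ! j"
    using bf_invariant_low_bin_unique[OF assms(1) i(1) assms(2)] \<open>i \<noteq> j\<close> \<open>loads ! i \<le> 1/2\<close> by linarith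
  ultimately show "has_low_bin loads \<and> 1/2 < loads ! j" using i(1) by (auto simp: has_low_bin_def)
next
  assume low: "has_low_bin loads \<and> 1/2 < loads ! j"
  then obtain i where i: "i < length loads" "loads ! i \<le> 1/2" by (auto simp: has_low_bin_def)
  with low have "i \<noteq> j" by auto
  with i show "has_low_bin (loads[j := y])" by (auto simp: has_low_bin_def)
qed

lemma bf_step_potential:
  assumes "bf_invariant loads" "medium_item x"
  shows "2 * length (bf_step loads x) + of_bool (fits_above_half loads x) + of_bool (has_low_bin loads)
           \<le> 2 * length loads + 1 + of_bool (has_low_bin (bf_step loads x))"
  using assms
proof (cases rule: bf_step_cases)
  case new_bin
  moreover have "has_low_bin (loads @ [x])"
    using assms(2) by (auto simp: has_low_bin_def medium_item_def nth_append intro!: exI[of _ "length loads"])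
  ultimately show ?thesis by simp
next
  case (update j)
  moreover have "has_low_bin loads" if "loads ! j \<le> 1/2"
    using that update(1) by (auto simp: has_low_bin_def)
  ultimately show ?thesis using has_low_bin_update[OF assms(1)] by auto
qed

lemma bf_step_closes_low_bin:
  assumes "bf_invariant loads" "medium_item x" "\<not> fits_above_half loads x" "has_low_bin loads"
  shows "\<not> has_low_bin (bf_step loads x)"
  using assms(1,2)
proof (cases rule: bf_step_cases)
  case (update j)
  then show ?thesis using assms has_low_bin_update by auto
qed (use assms in auto)

lemma bf_step_fills_low_bin:
  assumes "bf_invariant loads" "medium_item x" "\<not> fits_above_half loads x" "has_low_bin loads"
    and "low_bins_below_third loads" "x \<le> 1/3"
  shows "has_high_bin_with_room (bf_step loads x)"
  using assms(1,2)
proof (cases rule: bf_step_cases)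
  case (update j)
  then have "loads ! j \<le> 1/3" using assms(3,5) by (auto simp: low_bins_below_third_def)
  then show ?thesis using update assms(6)
    by (auto simp: has_high_bin_with_room_def intro!: exI[of _ j])
qed (use assms in auto)

lemma bf_step_opens_low_bin:
  assumes "bf_invariant loads" "medium_item x" "\<not> fits_above_half loads x" "\<not> has_low_bin loads"
    and "x \<le> 1/3"
  shows "has_low_bin (bf_step loads x) \<and> low_bins_below_third (bf_step loads x)"
  using assms(1,2)
proof (cases rule: bf_step_cases)
  case new_bin
  then show ?thesis using assms(5)
    by (auto simp: has_low_bin_def low_bins_below_third_def nth_append not_le
        intro!: exI[of _ "length loads"])
next
  case (update j)
  then show ?thesis using assms(3,4) by (auto simp: has_low_bin_def)
qed

lemma fits_above_half_if_room: "has_high_bin_with_room loads \<Longrightarrow> x \<le> 1/3 \<Longrightarrow> fits_above_half loads x"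
  by (auto simp: has_high_bin_with_room_def fits_above_half_def)

text \<open>A low bin is filled by the second small item at the latest; the filled bin has load at most
  \<open>2/3\<close>, so a small item fits above \<open>1/2\<close> by the fourth item at the latest.\<close>

lemma four_small_items_fit_above_half:
  assumes "bf_invariant loads" "\<forall>x\<in>set xs. medium_item x \<and> x \<le> 1/3" "length xs = 4"
  shows "\<exists>i<4. fits_above_half (foldl bf_step loads (take i xs)) (xs ! i)"
proof (rule ccontr)
  obtain x1 x2 x3 x4 where xs: "xs = [x1, x2, x3, x4]"
  proof
    show "xs = [xs ! 0, xs ! 1, xs ! 2, xs ! 3]"
      using assms(3) by (intro nth_equalityI) (auto simp: less_Suc_eq numeral_eq_Suc)
  qed
  define s1 where "s1 = bf_step loads x1"
  define s2 where "s2 = bf_step s1 x2"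
  define s3 where "s3 = bf_step s2 x3"
  assume "\<not> ?thesis"
  then have no_fit: "\<not> fits_above_half loads x1" "\<not> fits_above_half s1 x2"
      "\<not> fits_above_half s2 x3" "\<not> fits_above_half s3 x4"
    by (auto simp: xs s1_def s2_def s3_def numeral_eq_Suc All_less_Suc)
  have items: "medium_item x1" "medium_item x2" "medium_item x3" "medium_item x4"
    "x1 \<le> 1/3" "x2 \<le> 1/3" "x3 \<le> 1/3" "x4 \<le> 1/3"
    using assms(2) by (auto simp: xs)
  have inv: "bf_invariant s1" "bf_invariant s2"
    using assms(1) items by (simp_all add: s1_def s2_def bf_invariant_bf_step)
  have "has_high_bin_with_room s2 \<or> has_high_bin_with_room s3"
  proof (cases "has_low_bin loads")
    case True
    then have "\<not> has_low_bin s1"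
      using bf_step_closes_low_bin assms(1) items no_fit unfolding s1_def by blast
    then have "has_low_bin s2 \<and> low_bins_below_third s2"
      using bf_step_opens_low_bin inv items no_fit unfolding s2_def by blast
    then show ?thesis
      using bf_step_fills_low_bin inv items no_fit unfolding s3_def by blast
  next
    case False
    then have "has_low_bin s1 \<and> low_bins_below_third s1"
      using bf_step_opens_low_bin assms(1) items no_fit unfolding s1_def by blast
    then show ?thesis
      using bf_step_fills_low_bin inv items no_fit unfolding s2_def by blast
  qed
  then show False using fits_above_half_if_room items no_fit by blast
qed

definition bf_prefix :: "real list \<Rightarrow> nat \<Rightarrow> real list" where
  "bf_prefix L k = foldl bf_step [] (take k L)"

definition fit_events :: "real list \<Rightarrow> nat set" where
  "fit_events L = {k. k < length L \<and> fits_above_half (bf_prefix L k) (L ! k)}"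

lemma bf_prefix_add: "bf_prefix L (i + t) = foldl bf_step (bf_prefix L i) (take t (drop i L))"
  by (simp add: bf_prefix_def take_add)

lemma bf_prefix_Suc: "k < length L \<Longrightarrow> bf_prefix L (Suc k) = bf_step (bf_prefix L k) (L ! k)"
  by (simp add: bf_prefix_def take_Suc_conv_app_nth)

lemma bf_invariant_bf_prefix:
  assumes "\<forall>x\<in>set L. medium_item x"
  shows "bf_invariant (bf_prefix L k)"
proof (induction k)
  case 0
  then show ?case by (simp add: bf_prefix_def bf_invariant_def)
next
  case (Suc k)
  show ?case
  proof (cases "k < length L")
    case True
    then show ?thesis using Suc assms by (simp add: bf_prefix_Suc bf_invariant_bf_step)
  next
    case False
    then show ?thesis using Suc by (simp add: bf_prefix_def)
  qed
qed

lemma bf_prefix_potential: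
  assumes "\<forall>x\<in>set L. medium_item x" "k \<le> length L"
  shows "2 * length (bf_prefix L k) + card (fit_events L \<inter> {..<k})
           \<le> k + of_bool (has_low_bin (bf_prefix L k))"
  using assms(2)
proof (induction k)
  case 0
  then show ?case by (simp add: bf_prefix_def)
next
  case (Suc k)
  then have "k < length L" by simp
  have "fit_events L \<inter> {..<Suc k} = insert k (fit_events L \<inter> {..<k}) \<or>
      fit_events L \<inter> {..<Suc k} = fit_events L \<inter> {..<k}"
    by (auto simp: lessThan_Suc)
  then have "card (fit_events L \<inter> {..<Suc k})
      = card (fit_events L \<inter> {..<k}) + of_bool (fits_above_half (bf_prefix L k) (L ! k))"
    using \<open>k < length L\<close> by (auto simp: fit_events_def lessThan_Suc)
  moreover have "medium_item (L ! k)" using assms(1) \<open>k < length L\<close> by simp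
  ultimately show ?case
    using Suc bf_step_potential[OF bf_invariant_bf_prefix[OF assms(1)], of "L ! k" k]
    by (simp add: bf_prefix_Suc[OF \<open>k < length L\<close>])
qed

lemma BF_fit_events:
  assumes "\<forall>x\<in>set L. medium_item x"
  shows "2 * BF L + card (fit_events L) \<le> length L + 1"
proof -
  have "fit_events L \<inter> {..<length L} = fit_events L" by (auto simp: fit_events_def)
  then show ?thesis
    using bf_prefix_potential[OF assms order.refl] by (simp add: BF_def bf_prefix_def of_bool_def split: if_splits)
qed

lemma window_contains_fit_event:
  assumes "\<forall>x\<in>set L. medium_item x" "i \<in> windows (\<lambda>x. x \<le> 1/3) 4 L"
  shows "\<exists>e\<in>fit_events L. i \<le> e \<and> e \<le> i + 3"
proof -
  define xs where "xs = take 4 (drop i L)"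
  have len: "i + 4 \<le> length L" "length xs = 4" using assms(2) by (auto simp: windows_def xs_def)
  have nth_xs: "xs ! t = L ! (i + t)" if "t < 4" for t
    using that len by (simp add: xs_def)
  have "medium_item (xs ! t) \<and> xs ! t \<le> 1/3" if "t < 4" for t
    using assms that len nth_mem[of "i + t" L] by (simp add: nth_xs windows_def)
  then have "\<forall>x\<in>set xs. medium_item x \<and> x \<le> 1/3"
    using len(2) by (auto simp: in_set_conv_nth)
  then obtain t where "t < 4" "fits_above_half (foldl bf_step (bf_prefix L i) (take t xs)) (xs ! t)"
    using four_small_items_fit_above_half[OF bf_invariant_bf_prefix[OF assms(1)] _ len(2)] by blast
  then have "i + t \<in> fit_events L"
    using len by (simp add: fit_events_def bf_prefix_add nth_xs xs_def)
  then show ?thesis using \<open>t < 4\<close> by (intro bexI[of _ "i + t"]) auto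
qed

lemma finite_fit_events [simp]: "finite (fit_events L)"
  by (rule finite_subset[of _ "{..<length L}"]) (auto simp: fit_events_def)

lemma card_windows_le_fit_events:
  assumes "\<forall>x\<in>set L. medium_item x"
  shows "card (windows (\<lambda>x. x \<le> 1/3) 4 L) \<le> 4 * card (fit_events L)"
proof -
  have "windows (\<lambda>x. x \<le> 1/3) 4 L \<subseteq> (\<Union>e\<in>fit_events L. {e - 3..e})"
    using window_contains_fit_event[OF assms] by fastforce
  then have "card (windows (\<lambda>x. x \<le> 1/3) 4 L) \<le> card (\<Union>e\<in>fit_events L. {e - 3..e})"
    by (intro card_mono) auto
  also have "\<dots> \<le> (\<Sum>e\<in>fit_events L. card {e - 3..e})" by (rule card_UN_le) simp
  also have "\<dots> \<le> (\<Sum>e\<in>fit_events L. 4)" by (intro sum_mono) simp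
  finally show ?thesis by simp
qed

definition left_maximal_windows :: "('a \<Rightarrow> bool) \<Rightarrow> nat \<Rightarrow> 'a list \<Rightarrow> nat set" where
  "left_maximal_windows P k L = {i \<in> windows P k L. i = 0 \<or> \<not> P (L ! (i - 1))}"

lemma windows_subset_left_maximal_windows:
  "windows P k L \<subseteq> left_maximal_windows P k L \<union> Suc ` windows P (Suc k) L"
proof
  fix i assume i: "i \<in> windows P k L"
  show "i \<in> left_maximal_windows P k L \<union> Suc ` windows P (Suc k) L"
  proof (cases "i \<in> left_maximal_windows P k L")
    case False
    then have "0 < i" "P (L ! (i - 1))" using i by (auto simp: left_maximal_windows_def)
    moreover have "P (L ! (i - 1 + Suc t))" if "t < k" for t
      using i that \<open>0 < i\<close> by (simp add: windows_def)
    ultimately have "i - 1 \<in> windows P (Suc k) L"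
      using i by (auto simp: windows_def less_Suc_eq_0_disj)
    then show ?thesis using \<open>0 < i\<close> by (auto intro: image_eqI[of _ _ "i - 1"])
  qed simp
qed

lemma left_maximal_windows_far_apart:
  assumes "i \<in> windows P k L" "j \<in> left_maximal_windows P k L" "i < j"
  shows "i + k < j"
proof (rule ccontr)
  assume "\<not> i + k < j"
  then have "j - 1 - i < k" "i + (j - 1 - i) = j - 1" using assms(3) by linarith+
  moreover have "\<forall>t<k. P (L ! (i + t))" using assms(1) by (simp add: windows_def)
  ultimately have "P (L ! (j - 1))" by metis
  then show False using assms(2,3) by (auto simp: left_maximal_windows_def)
qed

lemma card_left_maximal_windows_le_fit_events:
  assumes "\<forall>x\<in>set L. medium_item x"
  shows "card (left_maximal_windows (\<lambda>x. x \<le> 1/3) 4 L) \<le> card (fit_events L)"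
proof -
  let ?W = "windows (\<lambda>x. x \<le> (1/3 :: real)) 4 L"
  let ?M = "left_maximal_windows (\<lambda>x. x \<le> (1/3 :: real)) 4 L"
  have "\<forall>i\<in>?W. \<exists>e. e \<in> fit_events L \<and> i \<le> e \<and> e \<le> i + 3"
    using window_contains_fit_event[OF assms] by blast
  from bchoice[OF this] obtain c where c: "\<forall>i\<in>?W. c i \<in> fit_events L \<and> i \<le> c i \<and> c i \<le> i + 3"
    by blast
  have M_sub: "?M \<subseteq> ?W" by (auto simp: left_maximal_windows_def)
  have eq: "i = j" if "i \<in> ?M" "j \<in> ?M" "c i = c j" "i \<le> j" for i j
  proof (rule ccontr)
    assume "i \<noteq> j"
    then have "i + 4 < j" using that M_sub by (intro left_maximal_windows_far_apart) auto
    moreover have "i \<in> ?W" "j \<in> ?W" using that(1,2) M_sub by auto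
    then have "j \<le> c j" "c i \<le> i + 3" using c by auto
    ultimately show False using that(3) by linarith
  qed
  have "inj_on c ?M"
  proof (rule inj_onI)
    fix i j assume "i \<in> ?M" "j \<in> ?M" "c i = c j"
    then show "i = j" using eq[of i j] eq[of j i] by (cases "i \<le> j") auto
  qed
  then show ?thesis using M_sub c by (intro card_inj_on_le) auto
qed

lemma card_windows_le_fit_events_windows:
  assumes "\<forall>x\<in>set L. medium_item x"
  shows "card (windows (\<lambda>x. x \<le> 1/3) 4 L)
           \<le> card (fit_events L) + card (windows (\<lambda>x. x \<le> 1/3) 5 L)"
proof -
  let ?W = "\<lambda>k. windows (\<lambda>x. x \<le> (1/3 :: real)) k L"
  have "card (?W 4) \<le> card (left_maximal_windows (\<lambda>x. x \<le> 1/3) 4 L \<union> Suc ` ?W 5)"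
    using windows_subset_left_maximal_windows[of _ 4]
    by (intro card_mono) (auto simp: left_maximal_windows_def numeral_eq_Suc)
  also have "\<dots> \<le> card (left_maximal_windows (\<lambda>x. x \<le> 1/3) 4 L) + card (Suc ` ?W 5)"
    by (rule card_Un_le)
  also have "\<dots> \<le> card (fit_events L) + card (?W 5)"
    using card_left_maximal_windows_le_fit_events[OF assms] card_image_le[of "?W 5" Suc] by simp
  finally show ?thesis .
qed

text \<open>Averaging the two bounds on the number of fit events with weights \<open>1/2\<close>.\<close>

lemma BF_windows_bound:
  assumes "\<forall>x\<in>set L. medium_item x"
  shows "16 * real (BF L) \<le> 8 * real (length L) + 8
           - 5 * real (card (windows (\<lambda>x. x \<le> 1/3) 4 L)) + 4 * real (card (windows (\<lambda>x. x \<le> 1/3) 5 L))"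
proof -
  have "real (2 * BF L + card (fit_events L)) \<le> real (length L + 1)"
    "real (card (windows (\<lambda>x. x \<le> 1/3) 4 L)) \<le> real (4 * card (fit_events L))"
    "real (card (windows (\<lambda>x. x \<le> 1/3) 4 L))
       \<le> real (card (fit_events L) + card (windows (\<lambda>x. x \<le> 1/3) 5 L))"
    using BF_fit_events[OF assms] card_windows_le_fit_events[OF assms]
      card_windows_le_fit_events_windows[OF assms] by (simp_all only: of_nat_le_iff)
  then show ?thesis by simp
qed

definition is_packing :: "real list \<Rightarrow> nat \<Rightarrow> (nat \<Rightarrow> nat) \<Rightarrow> bool" where
  "is_packing I k f \<longleftrightarrow> (\<forall>i < length I. f i < k) \<and>
     (\<forall>j < k. (\<Sum>i\<in>{i. i < length I \<and> f i = j}. I ! i) \<le> 1)"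

lemma Opt_eq_Least_is_packing: "Opt I = (LEAST k. \<exists>f. is_packing I k f)"
  unfolding Opt_def is_packing_def ..

lemma is_packing_id: "\<forall>x\<in>set I. x \<le> 1 \<Longrightarrow> is_packing I (length I) id"
proof -
  assume "\<forall>x\<in>set I. x \<le> 1"
  moreover have "{i. i < length I \<and> id i = j} = {j}" if "j < length I" for j using that by auto
  ultimately show ?thesis by (simp add: is_packing_def)
qed

lemma Opt_le_length: "\<forall>x\<in>set I. x \<le> 1 \<Longrightarrow> Opt I \<le> length I"
  unfolding Opt_eq_Least_is_packing by (intro Least_le exI[of _ id] is_packing_id)

lemma is_packing_Opt: "\<forall>x\<in>set I. x \<le> 1 \<Longrightarrow> \<exists>f. is_packing I (Opt I) f"
  unfolding Opt_eq_Least_is_packing by (rule LeastI_ex) (blast intro: is_packing_id)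

lemma card_le_mult_if_covered:
  assumes "A \<subseteq> (\<Union>j<m. B j)" "\<And>j. finite (B j)" "\<And>j. j < m \<Longrightarrow> card (B j) \<le> b"
  shows "card A \<le> b * m"
proof -
  have "card A \<le> card (\<Union>j<m. B j)" using assms(1,2) by (intro card_mono) auto
  also have "\<dots> \<le> (\<Sum>j<m. card (B j))" by (rule card_UN_le) simp
  also have "\<dots> \<le> (\<Sum>j<m. b)" using assms(3) by (intro sum_mono) auto
  finally show ?thesis by (simp add: mult.commute)
qed

lemma card_le_of_sum_le_1:
  fixes w :: "'a \<Rightarrow> real"
  assumes "finite B" "sum w B \<le> 1" "\<And>i. i \<in> B \<Longrightarrow> 1 / (real k + 1) < w i"
  shows "card B \<le> k"
proof (rule ccontr)
  assume "\<not> card B \<le> k"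
  then have "B \<noteq> {}" "real k + 1 \<le> real (card B)" by auto
  then have "1 \<le> (\<Sum>i\<in>B. 1 / (real k + 1))" by (simp add: field_simps)
  also have "\<dots> < sum w B" using \<open>B \<noteq> {}\<close> assms by (intro sum_strict_mono) auto
  finally show False using assms(2) by simp
qed

text \<open>A bin of an optimal packing holds at most three items, and at most two items larger
  than \<open>1/3\<close>.\<close>

lemma Opt_lower_bounds:
  assumes "\<forall>x\<in>set I. medium_item x"
  shows "length I \<le> 3 * Opt I" "length I \<le> card {i. i < length I \<and> I ! i \<le> 1/3} + 2 * Opt I"
proof -
  let ?n = "length I"
  have items: "1/4 < I ! i" "0 \<le> I ! i" if "i < ?n" for i
    using assms nth_mem[OF that] by (auto simp: medium_item_def)
  have "\<forall>x\<in>set I. x \<le> 1" using assms by (auto simp: medium_item_def)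
  then obtain f where "is_packing I (Opt I) f" using is_packing_Opt by blast
  then have f: "\<And>i. i < ?n \<Longrightarrow> f i < Opt I"
    "\<And>j. j < Opt I \<Longrightarrow> (\<Sum>i\<in>{i. i < ?n \<and> f i = j}. I ! i) \<le> 1"
    by (simp_all add: is_packing_def)
  define B where "B j = {i. i < ?n \<and> f i = j}" for j
  define C where "C j = {i \<in> B j. 1/3 < I ! i}" for j
  have finite: "finite (B j)" "finite (C j)" for j by (simp_all add: B_def C_def)
  have card_B: "card (B j) \<le> 3" if "j < Opt I" for j
    using f(2)[OF that] items(1) by (intro card_le_of_sum_le_1[OF finite(1)]) (auto simp: B_def)
  have card_C: "card (C j) \<le> 2" if "j < Opt I" for j
  proof (rule card_le_of_sum_le_1[OF finite(2)])
    have "sum ((!) I) (C j) \<le> sum ((!) I) (B j)"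
      using items(2) by (intro sum_mono2) (auto simp: B_def C_def)
    also have "\<dots> \<le> 1" using f(2)[OF that] by (simp add: B_def)
    finally show "sum ((!) I) (C j) \<le> 1" .
  qed (auto simp: C_def)
  have cover_B: "{..<?n} \<subseteq> (\<Union>j<Opt I. B j)" using f(1) by (auto simp: B_def)
  then show "?n \<le> 3 * Opt I" using card_le_mult_if_covered[OF cover_B finite(1) card_B] by simp
  have cover_C: "{i. i < ?n \<and> \<not> I ! i \<le> 1/3} \<subseteq> (\<Union>j<Opt I. C j)"
    using f(1) by (auto simp: B_def C_def)
  have split: "{..<?n} = {i. i < ?n \<and> I ! i \<le> 1/3} \<union> {i. i < ?n \<and> \<not> I ! i \<le> 1/3}" by auto
  have "?n = card ({i. i < ?n \<and> I ! i \<le> 1/3} \<union> {i. i < ?n \<and> \<not> I ! i \<le> 1/3})"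
    unfolding split[symmetric] by simp
  also have "\<dots> = card {i. i < ?n \<and> I ! i \<le> 1/3} + card {i. i < ?n \<and> \<not> I ! i \<le> 1/3}"
    by (rule card_Un_disjoint) auto
  finally have "?n = card {i. i < ?n \<and> I ! i \<le> 1/3} + card {i. i < ?n \<and> \<not> I ! i \<le> 1/3}" .
  moreover have "card {i. i < ?n \<and> \<not> I ! i \<le> 1/3} \<le> 2 * Opt I"
    using card_le_mult_if_covered[OF cover_C finite(2) card_C] by simp
  ultimately show "?n \<le> card {i. i < ?n \<and> I ! i \<le> 1/3} + 2 * Opt I" by linarith
qed

lemma bij_betw_permutes_permutations_of_set:
  "bij_betw (\<lambda>\<sigma>. map \<sigma> [0..<n]) {\<sigma>. \<sigma> permutes {..<n}} (permutations_of_set {..<n})"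
proof -
  let ?f = "\<lambda>\<sigma>. map \<sigma> [0..<n]"
  have "inj_on ?f {\<sigma>. \<sigma> permutes {..<n}}"
  proof (rule inj_onI)
    fix \<sigma> \<tau> assume "\<sigma> \<in> {\<sigma>. \<sigma> permutes {..<n}}" "\<tau> \<in> {\<sigma>. \<sigma> permutes {..<n}}" "?f \<sigma> = ?f \<tau>"
    then have "\<sigma> i = \<tau> i" for i
      by (cases "i < n") (auto simp: permutes_not_in dest: map_eq_conv[THEN iffD1])
    then show "\<sigma> = \<tau>" ..
  qed
  moreover have "?f ` {\<sigma>. \<sigma> permutes {..<n}} \<subseteq> permutations_of_set {..<n}"
    by (auto simp: permutations_of_set_def distinct_map permutes_image permutes_inj_on
        simp flip: atLeast0LessThan)
  moreover have "card (?f ` {\<sigma>. \<sigma> permutes {..<n}}) = card (permutations_of_set {..<n})"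
    using calculation(1) by (simp add: card_image card_permutations)
  ultimately show ?thesis
    by (simp add: bij_betw_def card_subset_eq)
qed

lemma E_BF_random_eq_average:
  "E_BF_random I = (\<Sum>xs\<in>permutations_of_set {..<length I}. real (BF (map ((!) I) xs))) / fact (length I)"
proof -
  have "(\<Sum>\<sigma>\<in>{\<sigma>. \<sigma> permutes {..<length I}}. real (BF (permute_list_by \<sigma> I)))
      = (\<Sum>xs\<in>permutations_of_set {..<length I}. real (BF (map ((!) I) xs)))"
    by (subst sum.reindex_bij_betw[OF bij_betw_permutes_permutations_of_set, symmetric])
      (simp add: permute_list_by_def o_def)
  then show ?thesis by (simp add: E_BF_random_def card_permutations)
qed

lemma window_averages_combination:
  assumes "5 \<le> n"
  shows "5 * (real (n - 3) * falling_factorial 4 s / falling_factorial 4 n)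
           - 4 * (real (n - 4) * falling_factorial 5 s / falling_factorial 5 n)
         = real s * (real s - 1) * (real s - 2) * (real s - 3) * (5 * real n - 4 * real s + 1)
           / (real n * (real n - 1) * (real n - 2) * (real n - 3))"
proof -
  have ff5: "falling_factorial 5 x = falling_factorial 4 x * (real x - 4)" for x
    using falling_factorial_Suc[of 4 x] by (simp add: numeral_eq_Suc)
  have diffs: "real (n - 3) = real n - 3" "real (n - 4) = real n - 4"
    using assms by (simp_all add: of_nat_diff)
  have combine: "5 * ((N - 3) * F / D) - 4 * ((N - 4) * (F * (S - 4)) / (D * (N - 4)))
      = F * (5 * N - 4 * S + 1) / D" if "D \<noteq> 0" "N - 4 \<noteq> 0" for F D N S :: real
    using that by (simp add: field_simps)
  show ?thesis
    unfolding ff5 falling_factorial_4 diffs by (rule combine) (use assms in auto)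
qed

lemma E_BF_random_quartic_bound:
  assumes "\<forall>x\<in>set I. medium_item x" "5 \<le> length I"
  defines "N \<equiv> real (length I)" and "S \<equiv> real (card {i. i < length I \<and> I ! i \<le> 1/3})"
  shows "16 * E_BF_random I
           \<le> 8 * N + 8 - S * (S - 1) * (S - 2) * (S - 3) * (5 * N - 4 * S + 1) / (N * (N - 1) * (N - 2) * (N - 3))"
proof -
  let ?n = "length I"
  let ?P = "permutations_of_set {..<?n}"
  let ?s = "card {i. i < length I \<and> I ! i \<le> 1/3}"
  define W where "W k xs = real (card (windows (\<lambda>i. I ! i \<le> 1/3) k xs))" for k xs
  have "16 * real (BF (map ((!) I) xs)) \<le> 8 * real ?n + 8 - 5 * W 4 xs + 4 * W 5 xs" if "xs \<in> ?P" for xs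
  proof -
    have "set xs = {..<?n}" "length xs = ?n"
      using that by (auto simp: permutations_of_set_def distinct_card[symmetric])
    then show ?thesis
      using BF_windows_bound[of "map ((!) I) xs"] assms(1) by (simp add: W_def windows_map o_def)
  qed
  then have "16 * (\<Sum>xs\<in>?P. real (BF (map ((!) I) xs))) / fact ?n
      \<le> (\<Sum>xs\<in>?P. 8 * real ?n + 8 - 5 * W 4 xs + 4 * W 5 xs) / fact ?n"
    by (intro divide_right_mono) (auto simp: sum_distrib_left intro: sum_mono)
  also have "\<dots> = 8 * real ?n + 8 - 5 * ((\<Sum>xs\<in>?P. W 4 xs) / fact ?n) + 4 * ((\<Sum>xs\<in>?P. W 5 xs) / fact ?n)"
    by (simp add: sum.distrib sum_subtractf sum_distrib_left add_divide_distrib diff_divide_distrib)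
  finally have "16 * E_BF_random I \<le> 8 * real ?n + 8
      - (5 * (real (?n - 3) * falling_factorial 4 ?s / falling_factorial 4 ?n)
         - 4 * (real (?n - 4) * falling_factorial 5 ?s / falling_factorial 5 ?n))"
    using assms(2) unfolding E_BF_random_eq_average W_def
    by (simp add: average_card_windows_permutations_of_set Suc_diff_le)
  then show ?thesis unfolding window_averages_combination[OF assms(2)] N_def S_def .
qed

lemma quartic_lower_bound:
  fixes y :: real
  assumes "40/121 \<le> y" "y \<le> 1"
  shows "8/243 \<le> y ^ 4 * (5 - 4 * y)"
proof (cases "y \<le> 1/2")
  case True
  have "(40/121) ^ 4 * 3 \<le> y ^ 4 * (5 - 4 * y)"
    using assms True by (intro mult_mono power_mono) auto
  then show ?thesis by (simp add: power4_eq_xxxx)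
next
  case False
  have "(1/2) ^ 4 * 1 \<le> y ^ 4 * (5 - 4 * y)"
    using assms False by (intro mult_mono power_mono) auto
  then show ?thesis by (simp add: power4_eq_xxxx)
qed

text \<open>With \<open>y = (S - 3) / (N - 3)\<close> each factor \<open>S - j\<close> dominates \<open>y (N - j)\<close>, so the
  ratio of falling factorials is at least \<open>y\<^sup>4\<close>.\<close>

lemma window_term_lower_bound:
  fixes N S :: real
  assumes "5 \<le> N" "S \<le> N" "121/81 * (N - S) < N - 3"
  shows "8/243 * (N - 3) \<le> S * (S - 1) * (S - 2) * (S - 3) * (5 * N - 4 * S + 1) / (N * (N - 1) * (N - 2) * (N - 3))"
proof -
  define y where "y = (S - 3) / (N - 3)"
  have N3: "0 < N - 3" using assms(1) by simp
  have y: "40/121 \<le> y" "y \<le> 1" unfolding y_def using assms N3 by (simp_all add: field_simps)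
  have factor: "y * (N - j) \<le> S - j" if "j \<le> 3" for j
  proof -
    have "S - j - y * (N - j) = (3 - j) * (1 - y)" unfolding y_def using N3 by (simp add: field_simps)
    then show ?thesis using that y(2) by (smt (verit) mult_nonneg_nonneg)
  qed
  have "0 \<le> y" using y(1) by simp
  moreover have "3 \<le> S"
    using factor[of 3] mult_nonneg_nonneg[OF \<open>0 \<le> y\<close> less_imp_le[OF N3]] by simp
  ultimately have "(y * N) * (y * (N - 1)) * (y * (N - 2)) * (y * (N - 3)) \<le> S * (S - 1) * (S - 2) * (S - 3)"
    using factor[of 0] factor[of 1] factor[of 2] factor[of 3] assms(1)
    by (intro mult_mono) (auto intro!: mult_nonneg_nonneg)
  then have "y ^ 4 * (N * (N - 1) * (N - 2) * (N - 3)) \<le> S * (S - 1) * (S - 2) * (S - 3)"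
    by (simp add: power4_eq_xxxx mult_ac)
  moreover have "0 < N * (N - 1) * (N - 2) * (N - 3)" using assms(1) by (intro mult_pos_pos) auto
  ultimately have "y ^ 4 \<le> S * (S - 1) * (S - 2) * (S - 3) / (N * (N - 1) * (N - 2) * (N - 3))"
    by (simp add: pos_le_divide_eq)
  moreover have "(N - 3) * (5 - 4 * y) \<le> 5 * N - 4 * S + 1" unfolding y_def using N3 by (simp add: field_simps)
  moreover have "0 \<le> (N - 3) * (5 - 4 * y)" using y(2) N3 by simp
  ultimately have "y ^ 4 * ((N - 3) * (5 - 4 * y))
      \<le> S * (S - 1) * (S - 2) * (S - 3) / (N * (N - 1) * (N - 2) * (N - 3)) * (5 * N - 4 * S + 1)"
    by (intro mult_mono') auto
  moreover have "8/243 * (N - 3) \<le> y ^ 4 * ((N - 3) * (5 - 4 * y))"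
    using mult_right_mono[OF quartic_lower_bound[OF y], of "N - 3"] N3 by (simp add: algebra_simps)
  moreover have "S * (S - 1) * (S - 2) * (S - 3) / (N * (N - 1) * (N - 2) * (N - 3)) * (5 * N - 4 * S + 1)
      = S * (S - 1) * (S - 2) * (S - 3) * (5 * N - 4 * S + 1) / (N * (N - 1) * (N - 2) * (N - 3))"
    by simp
  ultimately show ?thesis by linarith
qed

text \<open>If \<open>N - 3 \<le> (3 - \<mu>) m\<close> the trivial bound \<open>2 E \<le> N + 1\<close> suffices; otherwise
  \<open>n \<le> s + 2 m\<close> forces \<open>121/81 (N - S) < N - 3\<close>, and the window term saves \<open>(N - 3)/243\<close>.\<close>

lemma quartic_estimate_le_linear:
  fixes N S m \<mu> E :: real
  assumes \<mu>: "0 < \<mu>" "\<mu> < 1/81" and "5 \<le> N" "S \<le> N" "0 \<le> S * (S - 1) * (S - 2) * (S - 3)"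
    and Opt_bounds: "N \<le> 3 * m" "N \<le> S + 2 * m"
    and E: "16 * E \<le> 8 * N + 8 - S * (S - 1) * (S - 2) * (S - 3) * (5 * N - 4 * S + 1) / (N * (N - 1) * (N - 2) * (N - 3))"
  shows "E \<le> (3/2 - \<mu>/2) * m + 2"
proof -
  let ?T = "S * (S - 1) * (S - 2) * (S - 3) * (5 * N - 4 * S + 1) / (N * (N - 1) * (N - 2) * (N - 3))"
  have "0 < m" using Opt_bounds(1) \<open>5 \<le> N\<close> by simp
  have "\<mu> * N \<le> N / 81" using mult_right_mono[of \<mu> "1/81" N] \<mu> \<open>5 \<le> N\<close> by simp
  have "(3 - \<mu>) * N \<le> (3 - \<mu>) * (3 * m)" using Opt_bounds(1) \<mu> by (intro mult_left_mono) auto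
  have "\<mu> * m < m / 81" using mult_strict_right_mono[of \<mu> "1/81" m] \<mu> \<open>0 < m\<close> by simp
  have expand: "(3 - \<mu>) * m = 3 * m - \<mu> * m" "(3 - \<mu>) * N = 3 * N - \<mu> * N"
    "(3 - \<mu>) * (3 * m) = 9 * m - 3 * (\<mu> * m)" "(3/2 - \<mu>/2) * m = 3/2 * m - \<mu> * m / 2"
    by (simp_all add: algebra_simps)
  show ?thesis
  proof (cases "N - 3 \<le> (3 - \<mu>) * m")
    case True
    have "0 \<le> ?T"
      using assms(3,4) by (intro divide_nonneg_pos mult_nonneg_nonneg[OF assms(5)] mult_pos_pos) auto
    then show ?thesis using E True expand by argo
  next
    case False
    then have "121/81 * (N - S) < N - 3" using Opt_bounds \<open>\<mu> * m < m / 81\<close> expand by argo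
    then have "8/243 * (N - 3) \<le> ?T" by (rule window_term_lower_bound[OF assms(3,4)])
    then show ?thesis using E \<open>\<mu> * N \<le> N / 81\<close> \<open>(3 - \<mu>) * N \<le> (3 - \<mu>) * (3 * m)\<close> expand
      by argo
  qed
qed

lemma E_BF_random_le:
  fixes \<mu> :: real
  assumes items: "\<forall>x\<in>set I. medium_item x" and "5 \<le> Opt I" "0 < \<mu>" "\<mu> < 1/81"
  shows "E_BF_random I \<le> (3/2 - \<mu>/2) * real (Opt I) + 2"
proof -
  let ?s = "card {i. i < length I \<and> I ! i \<le> 1/3}"
  have "Opt I \<le> length I" using items by (intro Opt_le_length) (auto simp: medium_item_def)
  then have "5 \<le> length I" using assms(2) by simp
  have "?s \<le> length I" by (rule order.trans[OF card_mono card_lessThan[THEN eq_refl]]) auto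
  have "0 \<le> real ?s * (real ?s - 1) * (real ?s - 2) * (real ?s - 3)"
    using falling_factorial_nonneg[of 4 ?s] by (simp add: falling_factorial_4)
  moreover have "real (length I) \<le> 3 * real (Opt I)" "real (length I) \<le> real ?s + 2 * real (Opt I)"
    using Opt_lower_bounds[OF items] by linarith+
  ultimately show ?thesis
    using \<open>5 \<le> length I\<close> \<open>?s \<le> length I\<close>
    by (intro quartic_estimate_le_linear[OF assms(3,4) _ _ _ _ _ E_BF_random_quartic_bound[OF items]]) simp_all
qed

lemma Limsup_le_of_eventually_le_plus_inverse:
  fixes f :: "nat \<Rightarrow> ereal" and c C :: real
  assumes "eventually (\<lambda>m. f m \<le> ereal (c + C / real m)) sequentially"
  shows "limsup f \<le> ereal c"
proof -
  have "(\<lambda>m. c + C / real m) \<longlonglongrightarrow> c + 0"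
    by (intro tendsto_add tendsto_const lim_const_over_n)
  then have "(\<lambda>m. ereal (c + C / real m)) \<longlonglongrightarrow> ereal c" by (intro tendsto_ereal) simp
  then have "limsup (\<lambda>m. ereal (c + C / real m)) = ereal c" by (intro lim_imp_Limsup) simp_all
  then show ?thesis using Limsup_mono[OF assms] by simp
qed

theorem theorem1p4:
  fixes \<mu> :: real
  assumes "0 < \<mu>" and "\<mu> < 1" and "81 * \<mu> = (1 - \<mu>) ^ 3"
  shows "limsup (\<lambda>m::nat. SUP I \<in> {I :: real list. Opt I = m \<and>
                       (\<forall>x \<in> set I. 1/4 < x \<and> x \<le> 1/2)}.
                    ereal (E_BF_random I / real (Opt I)))
         \<le> ereal (3/2 - \<mu> / 2)"
proof -
  have "(1 - \<mu>) ^ 3 < 1 ^ 3" using assms(1,2) by (intro power_strict_mono) auto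
  then have "\<mu> < 1/81" using assms(3) by simp
  have "(SUP I \<in> {I :: real list. Opt I = m \<and> (\<forall>x \<in> set I. 1/4 < x \<and> x \<le> 1/2)}.
          ereal (E_BF_random I / real (Opt I))) \<le> ereal (3/2 - \<mu>/2 + 2 / real m)" if "5 \<le> m" for m
  proof (rule SUP_least)
    fix I assume "I \<in> {I :: real list. Opt I = m \<and> (\<forall>x \<in> set I. 1/4 < x \<and> x \<le> 1/2)}"
    then have "Opt I = m" "\<forall>x\<in>set I. medium_item x" by (auto simp: medium_item_def)
    then have "E_BF_random I \<le> (3/2 - \<mu>/2) * real m + 2"
      using E_BF_random_le[of I \<mu>] assms(1) \<open>\<mu> < 1/81\<close> that by simp
    moreover have "0 < real m" using that by simp
    ultimately show "ereal (E_BF_random I / real (Opt I)) \<le> ereal (3/2 - \<mu>/2 + 2 / real m)"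
      using \<open>Opt I = m\<close> by (simp add: field_simps)
  qed
  then show ?thesis
    by (intro Limsup_le_of_eventually_le_plus_inverse[where C = 2]) (auto simp: eventually_sequentially)
qed

end
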